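(* Assume $F\in\mathbb C^{n\times n}$ is Hermitian. Define Hermitian matrices $T_k\in\mathbb C^{k\times k}$ recursively by $$T_1=\frac{1+V_1^*FV_1}{2a_1},$$ and, for $k\ge2$, $$T_k=P_k^{-*}\left(\begin{bmatrix}T_{k-1}&0\\0&2a_k\end{bmatrix}+\frac1{2a_k}Q_k^{-*}V_k^*FV_kQ_k^{-1}\right)P_k^{-1},$$ where $$Q_k=\frac{1}{-2a_k}\begin{bmatrix}D_k&0\\ \mathbf 1_{k-1}^T&1\end{bmatrix},\qquad D_k=\operatorname{diag}(\alpha_k-\alpha_1,\dots,\alpha_k-\alpha_{k-1}),$$ and $P_k^{-1}$ is the $k\times k$ matrix $$P_k^{-1}=\begin{bmatrix}\operatorname{diag}\!\Big(\frac{\alpha_1-\alpha_k}{\alpha_1+\bar\alpha_k},\dots,\frac{\alpha_{k-1}-\alpha_k}{\alpha_{k-1}+\bar\alpha_k}\Big)&0\\ \Big(\frac{-1}{\alpha_1+\bar\alpha_k},\dots,\frac{-1}{\alpha_{k-1}+\bar\alpha_k}\Big)&\frac{-1}{2a_k}\end{bmatrix}$$ (with $P_k^{-*}$ its conjugate transpose). Then for every $k\ge1$, $$\Lambda_k^*T_k+T_k\Lambda_k-V_k^*FV_k-\mathbf 1\mathbf 1^*=0,$$ equivalently $T_k(i,j)=\dfrac{1+(V_k^*FV_k)_{ij}}{\bar\alpha_i+\alpha_j}$ for all $1\le i,j\le k$. In particular, the leading $(k-1)\times(k-1)$ principal submatrix of $T_k$ equals $T_{k-1}$.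
   Context: Let $A\in\mathbb C^{n\times n}$ and $C\in\mathbb C^{1\times n}$; $M^*$ denotes the conjugate transpose. Let $\alpha_1,\alpha_2,\dots\in\mathbb C$ be pairwise distinct with $a_j:=\operatorname{Re}(\alpha_j)>0$, and such that $-A^*+\alpha_jI$ is nonsingular for all $j$. Set $$V_k=\big[(-A^*+\alpha_1I)^{-1}C^*,\dots,(-A^*+\alpha_kI)^{-1}C^*\big]\in\mathbb C^{n\times k},$$ $\Lambda_k=\operatorname{diag}(\alpha_1,\dots,\alpha_k)$, and $\mathbf 1=[1,\dots,1]^T\in\mathbb R^k$. *)

theory Defs
  imports "Jordan_Normal_Form.Gauss_Jordan_Elimination" "Jordan_Normal_Form.Schur_Decomposition"
begin

text \<open>Matrix inverse (meaningful for invertible square matrices).\<close>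
definition minv :: "complex mat \<Rightarrow> complex mat" where
  "minv M = the (mat_inverse M)"

text \<open>Shifts alpha_1, alpha_2, ... are given by a function alpha :: nat => complex,
  used at indices 1, 2, ...; a_j = Re(alpha_j).\<close>
definition re_a :: "(nat \<Rightarrow> complex) \<Rightarrow> nat \<Rightarrow> complex" where
  "re_a \<alpha> j = complex_of_real (Re (\<alpha> j))"

definition Vmat :: "nat \<Rightarrow> complex mat \<Rightarrow> complex mat \<Rightarrow> (nat \<Rightarrow> complex) \<Rightarrow> nat \<Rightarrow> complex mat" where
  "Vmat n A C \<alpha> k = mat n k (\<lambda>(i, j).
      (minv (- mat_adjoint A + \<alpha> (j + 1) \<cdot>\<^sub>m 1\<^sub>m n) * mat_adjoint C) $$ (i, 0))"

definition Lam :: "(nat \<Rightarrow> complex) \<Rightarrow> nat \<Rightarrow> complex mat" where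
  "Lam \<alpha> k = mat_diag k (\<lambda>i. \<alpha> (i + 1))"

definition ones :: "nat \<Rightarrow> complex mat" where
  "ones k = mat k 1 (\<lambda>_. 1)"

definition Qmat :: "(nat \<Rightarrow> complex) \<Rightarrow> nat \<Rightarrow> complex mat" where
  "Qmat \<alpha> k = (1 / (- 2 * re_a \<alpha> k)) \<cdot>\<^sub>m
     four_block_mat (mat_diag (k - 1) (\<lambda>i. \<alpha> k - \<alpha> (i + 1))) (0\<^sub>m (k - 1) 1)
                    (mat 1 (k - 1) (\<lambda>_. 1)) (mat 1 1 (\<lambda>_. 1))"

definition Pinv :: "(nat \<Rightarrow> complex) \<Rightarrow> nat \<Rightarrow> complex mat" where
  "Pinv \<alpha> k =
     four_block_mat
       (mat_diag (k - 1) (\<lambda>i. (\<alpha> (i + 1) - \<alpha> k) / (\<alpha> (i + 1) + cnj (\<alpha> k))))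
       (0\<^sub>m (k - 1) 1)
       (mat 1 (k - 1) (\<lambda>(_, j). -1 / (\<alpha> (j + 1) + cnj (\<alpha> k))))
       (mat 1 1 (\<lambda>_. -1 / (2 * re_a \<alpha> k)))"

text \<open>The recursively defined matrices T_k (T 0 is an unused dummy).\<close>
fun Tmat :: "nat \<Rightarrow> complex mat \<Rightarrow> complex mat \<Rightarrow> complex mat \<Rightarrow> (nat \<Rightarrow> complex) \<Rightarrow> nat \<Rightarrow> complex mat" where
  "Tmat n A C F \<alpha> 0 = 0\<^sub>m 0 0"
| "Tmat n A C F \<alpha> (Suc 0) =
     (1 / (2 * re_a \<alpha> 1)) \<cdot>\<^sub>m
       (1\<^sub>m 1 + mat_adjoint (Vmat n A C \<alpha> 1) * F * Vmat n A C \<alpha> 1)"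
| "Tmat n A C F \<alpha> (Suc (Suc m)) =
     (let k = Suc (Suc m); V = Vmat n A C \<alpha> k; Qi = minv (Qmat \<alpha> k); Pi = Pinv \<alpha> k in
      mat_adjoint Pi *
        (four_block_mat (Tmat n A C F \<alpha> (Suc m)) (0\<^sub>m (k - 1) 1) (0\<^sub>m 1 (k - 1))
                        (mat 1 1 (\<lambda>_. 2 * re_a \<alpha> k))
         + (1 / (2 * re_a \<alpha> k)) \<cdot>\<^sub>m (mat_adjoint Qi * mat_adjoint V * F * V * Qi))
      * Pi)"

end

theory Submission
  imports Defs
begin

text \<open>
  Write beta_i = alpha_(i+1) for the shifts in 0-based indexing and g_ij for the
  entries of the Gram matrix V_k^* F V_k; these entries do not depend on k.
  The heart of the matter is that T_k equals the Cauchy-like matrix C_k with entries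
  (1 + g_ij) / (conj beta_i + beta_j).  Once this is known, the Lyapunov equation
  Lambda_k^* T_k + T_k Lambda_k - V_k^* F V_k - 1 1^* = 0 is checked entrywise, and
  the leading (k-1) x (k-1) block of C_k is visibly C_(k-1).

  The matrices Q_k, Q_k^(-1) and P_k^(-1) are
  all arrow matrices (a diagonal plus a last row), so multiplying by them only combines
  a row or column with the last one.
\<close>

lemma mat_adjoint_dims [simp]:
  "dim_row (mat_adjoint M) = dim_col M" "dim_col (mat_adjoint M) = dim_row M"
  unfolding mat_adjoint_def by auto

lemma mat_adjoint_index [simp]:
  fixes M :: "complex mat"
  shows "i < dim_col M \<Longrightarrow> j < dim_row M \<Longrightarrow> mat_adjoint M $$ (i, j) = cnj (M $$ (j, i))"
  unfolding mat_adjoint_def by (auto simp: mat_of_rows_def)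

lemma minv_eq_left_inverse:
  assumes A: "A \<in> carrier_mat n n" and B: "B \<in> carrier_mat n n" and BA: "B * A = 1\<^sub>m n"
  shows "minv A = B"
proof -
  have "det A \<noteq> 0" using arg_cong[OF BA, of det] det_mult[OF B A] by auto
  hence "A \<in> Units (ring_mat TYPE(complex) n ())" by (rule det_non_zero_imp_unit[OF A])
  then obtain B' where inv: "mat_inverse A = Some B'"
    using mat_inverse(1)[OF A, of "()"] by (cases "mat_inverse A") auto
  from mat_inverse(2)[OF A inv] have AB': "A * B' = 1\<^sub>m n" and B': "B' \<in> carrier_mat n n" by auto
  have "B = (B * A) * B'" using B B' AB' by (simp add: assoc_mult_mat[OF B A B'])
  also have "\<dots> = B'" using BA B' by simp
  finally show ?thesis unfolding minv_def inv by simp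
qed

section \<open>Arrow matrices\<close>

text \<open>
  arrow_mat N d r is the (N+1) x (N+1) matrix with diagonal d plus the row r added to
  its last row; its corner entry is d N + r N.  Q_k, its inverse and P_k^(-1) all have
  this shape.
\<close>

definition arrow_mat :: "nat \<Rightarrow> (nat \<Rightarrow> complex) \<Rightarrow> (nat \<Rightarrow> complex) \<Rightarrow> complex mat" where
  "arrow_mat N d r = mat (Suc N) (Suc N)
     (\<lambda>(p, q). (if p = q then d q else 0) + (if p = N then r q else 0))"

lemma arrow_mat_carrier [simp]: "arrow_mat N d r \<in> carrier_mat (Suc N) (Suc N)"
  and arrow_mat_dims [simp]: "dim_row (arrow_mat N d r) = Suc N" "dim_col (arrow_mat N d r) = Suc N"
  unfolding arrow_mat_def by auto

lemma mult_arrow_mat_index: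
  assumes M: "M \<in> carrier_mat m (Suc N)" and i: "i < m" and j: "j \<le> N"
  shows "(M * arrow_mat N d r) $$ (i, j) = M $$ (i, j) * d j + M $$ (i, N) * r j"
proof -
  have "(M * arrow_mat N d r) $$ (i, j)
      = (\<Sum>p<Suc N. M $$ (i, p) * ((if p = j then d j else 0) + (if p = N then r j else 0)))"
    using M i j by (auto simp: scalar_prod_def arrow_mat_def lessThan_atLeast0 intro!: sum.cong)
  also have "\<dots> = (\<Sum>p<Suc N. (if p = j then M $$ (i, p) * d j else 0))
                   + (\<Sum>p<Suc N. (if p = N then M $$ (i, p) * r j else 0))"
    by (subst sum.distrib[symmetric], rule sum.cong) (auto simp: algebra_simps)
  also have "\<dots> = M $$ (i, j) * d j + M $$ (i, N) * r j"
    using j by simp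
  finally show ?thesis .
qed

lemma arrow_mat_adjoint_mult_index:
  assumes M: "M \<in> carrier_mat (Suc N) m" and i: "i \<le> N" and j: "j < m"
  shows "(mat_adjoint (arrow_mat N d r) * M) $$ (i, j) = cnj (d i) * M $$ (i, j) + cnj (r i) * M $$ (N, j)"
proof -
  have "(mat_adjoint (arrow_mat N d r) * M) $$ (i, j)
      = (\<Sum>p<Suc N. ((if i = p then cnj (d i) else 0) + (if p = N then cnj (r i) else 0)) * M $$ (p, j))"
    using M i j by (auto simp: scalar_prod_def arrow_mat_def lessThan_atLeast0 intro!: sum.cong)
  also have "\<dots> = (\<Sum>p<Suc N. (if p = i then cnj (d i) * M $$ (p, j) else 0))
                   + (\<Sum>p<Suc N. (if p = N then cnj (r i) * M $$ (p, j) else 0))"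
    by (subst sum.distrib[symmetric], rule sum.cong) (auto simp: algebra_simps)
  also have "\<dots> = cnj (d i) * M $$ (i, j) + cnj (r i) * M $$ (N, j)"
    using i by simp
  finally show ?thesis .
qed

lemma arrow_mat_congruence_index:
  assumes M: "M \<in> carrier_mat (Suc N) (Suc N)" and i: "i \<le> N" and j: "j \<le> N"
  shows "(mat_adjoint (arrow_mat N d r) * M * arrow_mat N d r) $$ (i, j) =
     cnj (d i) * (M $$ (i, j) * d j + M $$ (i, N) * r j) + cnj (r i) * (M $$ (N, j) * d j + M $$ (N, N) * r j)"
proof -
  have left: "(mat_adjoint (arrow_mat N d r) * M) $$ (i, q) = cnj (d i) * M $$ (i, q) + cnj (r i) * M $$ (N, q)"
    if "q \<le> N" for q
    using arrow_mat_adjoint_mult_index[OF M i] that by simp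
  have "mat_adjoint (arrow_mat N d r) * M \<in> carrier_mat (Suc N) (Suc N)"
    using M by auto
  from mult_arrow_mat_index[OF this _ j, of i d r] i
  show ?thesis by (simp add: left j algebra_simps)
qed

lemma arrow_mat_mult:
  "arrow_mat N d r * arrow_mat N d' r'
     = arrow_mat N (\<lambda>q. d q * d' q) (\<lambda>q. r q * d' q + (d N + r N) * r' q)"
proof (rule eq_matI)
  fix p q assume "p < dim_row (arrow_mat N (\<lambda>q. d q * d' q) (\<lambda>q. r q * d' q + (d N + r N) * r' q))"
    and "q < dim_col (arrow_mat N (\<lambda>q. d q * d' q) (\<lambda>q. r q * d' q + (d N + r N) * r' q))"
  hence p: "p < Suc N" and q: "q \<le> N" by auto
  show "(arrow_mat N d r * arrow_mat N d' r') $$ (p, q)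
      = arrow_mat N (\<lambda>q. d q * d' q) (\<lambda>q. r q * d' q + (d N + r N) * r' q) $$ (p, q)"
    using mult_arrow_mat_index[OF arrow_mat_carrier p q, of d r d' r'] p q
    by (simp add: arrow_mat_def algebra_simps)
qed auto

lemma arrow_mat_eq_one:
  assumes "\<And>q. q < N \<Longrightarrow> d q = 1" "\<And>q. q < N \<Longrightarrow> r q = 0" "d N + r N = 1"
  shows "arrow_mat N d r = 1\<^sub>m (Suc N)"
  using assms by (intro eq_matI) (auto simp: arrow_mat_def less_Suc_eq)

lemma double_re_a: "2 * re_a \<alpha> k = \<alpha> k + cnj (\<alpha> k)"
  unfolding re_a_def using complex_add_cnj[of "\<alpha> k"] by simp

lemma Qmat_arrow:
  "Qmat \<alpha> (Suc N) = arrow_mat N (\<lambda>q. (\<alpha> (Suc N) - \<alpha> (Suc q)) / (- 2 * re_a \<alpha> (Suc N)))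
                                 (\<lambda>_. 1 / (- 2 * re_a \<alpha> (Suc N)))"
  unfolding Qmat_def arrow_mat_def by (rule eq_matI) (auto simp: mat_diag_def)

lemma Pinv_arrow:
  "Pinv \<alpha> (Suc N) = arrow_mat N (\<lambda>p. (\<alpha> (Suc p) - \<alpha> (Suc N)) / (\<alpha> (Suc p) + cnj (\<alpha> (Suc N))))
                                 (\<lambda>p. -1 / (\<alpha> (Suc p) + cnj (\<alpha> (Suc N))))"
  unfolding Pinv_def arrow_mat_def by (rule eq_matI) (auto simp: mat_diag_def double_re_a less_Suc_eq)

lemma Qmat_inverse:
  assumes a_nz: "re_a \<alpha> (Suc N) \<noteq> 0" and fresh: "\<alpha> (Suc N) \<notin> \<alpha> ` {1..N}"
  defines "a \<equiv> 2 * re_a \<alpha> (Suc N)"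
  shows "minv (Qmat \<alpha> (Suc N)) =
    arrow_mat N (\<lambda>p. - a / (\<alpha> (Suc N) - \<alpha> (Suc p)))
                (\<lambda>p. if p < N then a / (\<alpha> (Suc N) - \<alpha> (Suc p)) else - a)"
proof (rule minv_eq_left_inverse)
  have shift_ne: "\<alpha> (Suc p) \<noteq> \<alpha> (Suc N)" if "p < N" for p
  proof
    assume "\<alpha> (Suc p) = \<alpha> (Suc N)"
    moreover have "Suc p \<in> {1..N}" using that by simp
    ultimately show False using fresh by (metis image_eqI)
  qed
  show "arrow_mat N (\<lambda>p. - a / (\<alpha> (Suc N) - \<alpha> (Suc p)))
                (\<lambda>p. if p < N then a / (\<alpha> (Suc N) - \<alpha> (Suc p)) else - a) * Qmat \<alpha> (Suc N)
        = 1\<^sub>m (Suc N)"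
    unfolding Qmat_arrow arrow_mat_mult a_def using a_nz by (intro arrow_mat_eq_one) (auto dest: shift_ne)
qed (auto simp: Qmat_arrow)

text \<open>
  V_entry n A C alpha p j is entry p of the column (-A^* + alpha_(j+1) I)^(-1) C^*, i.e. of
  column j of every V_k with k > j; hence the Gram entries below do not depend on k.
\<close>

definition V_entry :: "nat \<Rightarrow> complex mat \<Rightarrow> complex mat \<Rightarrow> (nat \<Rightarrow> complex) \<Rightarrow> nat \<Rightarrow> nat \<Rightarrow> complex" where
  "V_entry n A C \<alpha> p j = (minv (- mat_adjoint A + \<alpha> (Suc j) \<cdot>\<^sub>m 1\<^sub>m n) * mat_adjoint C) $$ (p, 0)"

definition gram_entry ::
  "nat \<Rightarrow> complex mat \<Rightarrow> complex mat \<Rightarrow> complex mat \<Rightarrow> (nat \<Rightarrow> complex) \<Rightarrow> nat \<Rightarrow> nat \<Rightarrow> complex" where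
  "gram_entry n A C F \<alpha> i j =
     (\<Sum>p<n. (\<Sum>q<n. cnj (V_entry n A C \<alpha> q i) * F $$ (q, p)) * V_entry n A C \<alpha> p j)"

lemma Vmat_carrier [simp]: "Vmat n A C \<alpha> k \<in> carrier_mat n k"
  unfolding Vmat_def by auto

lemma Vmat_gram:
  assumes F: "F \<in> carrier_mat n n"
  shows "mat_adjoint (Vmat n A C \<alpha> k) * F * Vmat n A C \<alpha> k = mat k k (\<lambda>(i, j). gram_entry n A C F \<alpha> i j)"
  using F unfolding gram_entry_def
  by (intro eq_matI) (auto simp: scalar_prod_def Vmat_def V_entry_def lessThan_atLeast0 intro!: sum.cong)

section \<open>Cauchy-like matrices\<close>

definition cauchy_mat :: "nat \<Rightarrow> (nat \<Rightarrow> complex) \<Rightarrow> (nat \<Rightarrow> nat \<Rightarrow> complex) \<Rightarrow> complex mat" where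
  "cauchy_mat k \<beta> g = mat k k (\<lambda>(i, j). (1 + g i j) / (cnj (\<beta> i) + \<beta> j))"

lemma cauchy_mat_carrier [simp]: "cauchy_mat k \<beta> g \<in> carrier_mat k k"
  and cauchy_mat_dims [simp]: "dim_row (cauchy_mat k \<beta> g) = k" "dim_col (cauchy_mat k \<beta> g) = k"
  unfolding cauchy_mat_def by auto

lemma cauchy_mat_index [simp]:
  "i < k \<Longrightarrow> j < k \<Longrightarrow> cauchy_mat k \<beta> g $$ (i, j) = (1 + g i j) / (cnj (\<beta> i) + \<beta> j)"
  unfolding cauchy_mat_def by simp

lemma cauchy_mat_leading:
  "N \<le> k \<Longrightarrow> mat N N (\<lambda>(i, j). cauchy_mat k \<beta> g $$ (i, j)) = cauchy_mat N \<beta> g"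
  by (intro eq_matI) (auto simp: cauchy_mat_def)

lemma cauchy_mat_lyapunov:
  assumes nz: "\<And>i j. i < k \<Longrightarrow> j < k \<Longrightarrow> cnj (\<beta> i) + \<beta> j \<noteq> 0"
  shows "mat_adjoint (mat_diag k \<beta>) * cauchy_mat k \<beta> g + cauchy_mat k \<beta> g * mat_diag k \<beta>
           - mat k k (\<lambda>(i, j). g i j) - ones k * mat_adjoint (ones k) = 0\<^sub>m k k"
proof -
  have adj: "mat_adjoint (mat_diag k \<beta>) = mat_diag k (\<lambda>i. cnj (\<beta> i))"
    by (intro eq_matI) (auto simp: mat_diag_def)
  have ones: "ones k * mat_adjoint (ones k) = mat k k (\<lambda>_. 1)"
    by (intro eq_matI) (auto simp: ones_def scalar_prod_def)
  have entry: "cnj (\<beta> i) * ((1 + g i j) / (cnj (\<beta> i) + \<beta> j)) + (1 + g i j) / (cnj (\<beta> i) + \<beta> j) * \<beta> j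
                 - g i j - 1 = 0" if "i < k" "j < k" for i j
    using nz[OF that] by (simp add: divide_simps) (simp add: algebra_simps)
  show ?thesis
    unfolding adj ones mat_diag_mult_left[OF cauchy_mat_carrier] mat_diag_mult_right[OF cauchy_mat_carrier]
    using entry by (intro eq_matI) auto
qed

lemma cnj_add_nonzero:
  assumes "Re x > 0" "Re y > 0" shows "cnj x + y \<noteq> 0"
proof
  assume "cnj x + y = 0"
  hence "Re (cnj x) + Re y = 0" by (metis plus_complex.sel(1) zero_complex.sel(1))
  with assms show False by simp
qed

section \<open>One step of the recursion\<close>

lemma middle_matrix_index:
  fixes \<beta> :: "nat \<Rightarrow> complex" and g :: "nat \<Rightarrow> nat \<Rightarrow> complex"
  assumes p: "p \<le> N" and q: "q \<le> N"
  shows "(four_block_mat (cauchy_mat N \<beta> g) (0\<^sub>m N 1) (0\<^sub>m 1 N) (mat 1 1 (\<lambda>_. a))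
           + (1 / a) \<cdot>\<^sub>m (mat_adjoint (arrow_mat N x y) * mat (Suc N) (Suc N) (\<lambda>(p, q). g p q)
                          * arrow_mat N x y)) $$ (p, q)
       = (if p < N then (if q < N then (1 + g p q) / (cnj (\<beta> p) + \<beta> q) else 0)
          else (if q < N then 0 else a))
         + (1 / a) * (cnj (x p) * (g p q * x q + g p N * y q) + cnj (y p) * (g N q * x q + g N N * y q))"
proof -
  have "(mat_adjoint (arrow_mat N x y) * mat (Suc N) (Suc N) (\<lambda>(p, q). g p q) * arrow_mat N x y) $$ (p, q)
      = cnj (x p) * (g p q * x q + g p N * y q) + cnj (y p) * (g N q * x q + g N N * y q)"
    by (subst arrow_mat_congruence_index) (use p q in auto)
  then show ?thesis using p q by (auto simp: less_Suc_eq_le)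
qed

text \<open>
  The same entries for the arrow matrix X = Q_(N+1)^(-1), in the four cases interior,
  last column, last row and corner; here a = beta_N + conj beta_N = 2 a_(N+1).
\<close>
lemma middle_matrix_entries:
  fixes \<beta> :: "nat \<Rightarrow> complex" and g :: "nat \<Rightarrow> nat \<Rightarrow> complex"
  assumes a: "a = \<beta> N + cnj (\<beta> N)" and a_nz: "a \<noteq> 0"
    and fresh: "\<beta> N \<notin> \<beta> ` {..<N}"
  defines "X \<equiv> arrow_mat N (\<lambda>p. - a / (\<beta> N - \<beta> p)) (\<lambda>p. if p < N then a / (\<beta> N - \<beta> p) else - a)"
  defines "S \<equiv> four_block_mat (cauchy_mat N \<beta> g) (0\<^sub>m N 1) (0\<^sub>m 1 N) (mat 1 1 (\<lambda>_. a))
             + (1 / a) \<cdot>\<^sub>m (mat_adjoint X * mat (Suc N) (Suc N) (\<lambda>(p, q). g p q) * X)"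
  shows "S $$ (N, N) = a + a * g N N"
    and "p < N \<Longrightarrow> S $$ (p, N) = a * (g p N - g N N) / (cnj (\<beta> N) - cnj (\<beta> p))"
    and "q < N \<Longrightarrow> S $$ (N, q) = a * (g N q - g N N) / (\<beta> N - \<beta> q)"
    and "p < N \<Longrightarrow> q < N \<Longrightarrow> S $$ (p, q) = (1 + g p q) / (cnj (\<beta> p) + \<beta> q)
           + a * (g p q - g p N - g N q + g N N) / ((cnj (\<beta> N) - cnj (\<beta> p)) * (\<beta> N - \<beta> q))"
proof -
  define x where "x = (\<lambda>p. - a / (\<beta> N - \<beta> p))"
  define y where "y = (\<lambda>p. if p < N then a / (\<beta> N - \<beta> p) else - a)"
  have ca: "cnj a = a" unfolding a by (simp add: add.commute)
  have diff_nz: "\<beta> N - \<beta> p \<noteq> 0" and cnj_diff_nz: "cnj (\<beta> N) - cnj (\<beta> p) \<noteq> 0" if "p < N" for p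
    using fresh that by auto
  have last: "x N = 0" "y N = - a" "cnj (x N) = 0" "cnj (y N) = - a"
    unfolding x_def y_def using ca by auto
  have other: "x p = - a / (\<beta> N - \<beta> p)" "y p = a / (\<beta> N - \<beta> p)"
    "cnj (x p) = - a / (cnj (\<beta> N) - cnj (\<beta> p))" "cnj (y p) = a / (cnj (\<beta> N) - cnj (\<beta> p))"
    if "p < N" for p
    unfolding x_def y_def using that ca by auto
  have S: "S $$ (p, q) = (if p < N then (if q < N then (1 + g p q) / (cnj (\<beta> p) + \<beta> q) else 0)
                          else (if q < N then 0 else a))
      + (1 / a) * (cnj (x p) * (g p q * x q + g p N * y q) + cnj (y p) * (g N q * x q + g N N * y q))"
    if "p \<le> N" "q \<le> N" for p q
    unfolding S_def X_def x_def[symmetric] y_def[symmetric] by (rule middle_matrix_index[OF that])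
  show "S $$ (N, N) = a + a * g N N"
    unfolding S[OF order.refl order.refl] last using a_nz ca by (simp add: divide_simps)
  show "S $$ (p, N) = a * (g p N - g N N) / (cnj (\<beta> N) - cnj (\<beta> p))" if "p < N" for p
    unfolding S[OF less_imp_le[OF that] order.refl] other[OF that] last
    using a_nz ca cnj_diff_nz[OF that] that by (simp add: divide_simps) (simp add: algebra_simps)
  show "S $$ (N, q) = a * (g N q - g N N) / (\<beta> N - \<beta> q)" if "q < N" for q
    unfolding S[OF order.refl less_imp_le[OF that]] other[OF that] last
    using a_nz ca diff_nz[OF that] that by (simp add: divide_simps) (simp add: algebra_simps)
  show "S $$ (p, q) = (1 + g p q) / (cnj (\<beta> p) + \<beta> q)
           + a * (g p q - g p N - g N q + g N N) / ((cnj (\<beta> N) - cnj (\<beta> p)) * (\<beta> N - \<beta> q))"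
    if "p < N" "q < N" for p q
  proof -
    have "(1 / a) * (cnj (x p) * (g p q * x q + g p N * y q) + cnj (y p) * (g N q * x q + g N N * y q))
        = a * (g p q - g p N - g N q + g N N) / ((cnj (\<beta> N) - cnj (\<beta> p)) * (\<beta> N - \<beta> q))"
      unfolding other[OF that(1)] other[OF that(2)]
      using a_nz ca diff_nz[OF that(2)] cnj_diff_nz[OF that(1)] by (simp add: divide_simps) (simp add: algebra_simps)
    then show ?thesis
      unfolding S[OF less_imp_le[OF that(1)] less_imp_le[OF that(2)]] using that by simp
  qed
qed

text \<open>
  The four scalar identities behind the induction step: the entries of the middle matrix,
  transformed by the arrow matrix P^(-1), are the Cauchy entries.  Here ci, bj, b, c stand
  for conj beta_i, beta_j, beta_N, conj beta_N.
\<close>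
lemma congruence_identity_interior:
  fixes a b c ci bj gij giN gNj gNN Sij SiN SNj SNN :: "'a :: field"
  assumes a: "a = b + c"
    and nz: "ci + bj \<noteq> 0" "ci + b \<noteq> 0" "bj + c \<noteq> 0" "c - ci \<noteq> 0" "b - bj \<noteq> 0"
    and Sij: "Sij = (1 + gij) / (ci + bj) + a * (gij - giN - gNj + gNN) / ((c - ci) * (b - bj))"
    and SiN: "SiN = a * (giN - gNN) / (c - ci)"
    and SNj: "SNj = a * (gNj - gNN) / (b - bj)"
    and SNN: "SNN = a + a * gNN"
  shows "((ci - c) / (ci + b)) * (Sij * ((bj - b) / (bj + c)) + SiN * (-1 / (bj + c)))
       + (-1 / (ci + b)) * (SNj * ((bj - b) / (bj + c)) + SNN * (-1 / (bj + c)))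
       = (1 + gij) / (ci + bj)"
proof -
  have "((ci - c) / (ci + b)) * (Sij * ((bj - b) / (bj + c)) + SiN * (-1 / (bj + c)))
       + (-1 / (ci + b)) * (SNj * ((bj - b) / (bj + c)) + SNN * (-1 / (bj + c)))
      = ((ci - c) * (bj - b) * Sij - (ci - c) * SiN - (bj - b) * SNj + SNN) / ((ci + b) * (bj + c))"
    using nz(2,3) by (simp add: divide_simps) (simp add: algebra_simps)
  also have "(ci - c) * (bj - b) * Sij = (c - ci) * (b - bj) * (1 + gij) / (ci + bj) + a * (gij - giN - gNj + gNN)"
  proof -
    have "(c - ci) * (b - bj) * (a * (gij - giN - gNj + gNN) / ((c - ci) * (b - bj))) = a * (gij - giN - gNj + gNN)"
      using nz(4,5) by simp
    moreover have "(ci - c) * (bj - b) = (c - ci) * (b - bj)" by (simp add: algebra_simps)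
    ultimately show ?thesis unfolding Sij by (simp add: distrib_left)
  qed
  also have "(ci - c) * SiN = - a * (giN - gNN)"
    unfolding SiN using nz(4) by (simp add: field_simps)
  also have "(bj - b) * SNj = - a * (gNj - gNN)"
    unfolding SNj using nz(5) by (simp add: field_simps)
  also have "(c - ci) * (b - bj) * (1 + gij) / (ci + bj) + a * (gij - giN - gNj + gNN)
               - - a * (giN - gNN) - - a * (gNj - gNN) + SNN
             = (1 + gij) * ((c - ci) * (b - bj) + a * (ci + bj)) / (ci + bj)"
    unfolding SNN using nz(1) by (simp add: field_simps)
  also have "(c - ci) * (b - bj) + a * (ci + bj) = (ci + b) * (bj + c)"
    unfolding a by (simp add: algebra_simps)
  finally show ?thesis
    using nz(2,3) by simp
qed

text \<open>Last column (j = N, where u_N = 0 and w_N = -1/a).\<close>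
lemma congruence_identity_last_col:
  fixes a b c ci giN gNN :: "'a :: field"
  assumes nz: "ci + b \<noteq> 0" "a \<noteq> 0" "c - ci \<noteq> 0"
  shows "((ci - c) / (ci + b)) * ((a * (giN - gNN) / (c - ci)) * (-1 / a))
       + (-1 / (ci + b)) * ((a + a * gNN) * (-1 / a)) = (1 + giN) / (ci + b)"
proof -
  have "((ci - c) / (ci + b)) * ((a * (giN - gNN) / (c - ci)) * (-1 / a)) = (giN - gNN) / (ci + b)"
    using nz by (simp add: divide_simps) (simp add: algebra_simps)
  moreover have "(-1 / (ci + b)) * ((a + a * gNN) * (-1 / a)) = (1 + gNN) / (ci + b)"
    using nz by (simp add: divide_simps) (simp add: algebra_simps)
  ultimately show ?thesis by (simp add: add_divide_distrib[symmetric])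
qed

text \<open>Last row (i = N).\<close>
lemma congruence_identity_last_row:
  fixes a b c bj gNj gNN :: "'a :: field"
  assumes nz: "bj + c \<noteq> 0" "a \<noteq> 0" "b - bj \<noteq> 0"
  shows "(-1 / a) * ((a * (gNj - gNN) / (b - bj)) * ((bj - b) / (bj + c)) + (a + a * gNN) * (-1 / (bj + c)))
       = (1 + gNj) / (c + bj)"
proof -
  have "(a * (gNj - gNN) / (b - bj)) * ((bj - b) / (bj + c)) = - a * (gNj - gNN) / (bj + c)"
    using nz by (simp add: divide_simps) (simp add: algebra_simps)
  moreover have "(a + a * gNN) * (-1 / (bj + c)) = - a * (1 + gNN) / (bj + c)"
    using nz by (simp add: divide_simps) (simp add: algebra_simps)
  ultimately show ?thesis using nz by (simp add: divide_simps) (simp add: algebra_simps)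
qed

text \<open>Corner (i = j = N).\<close>
lemma congruence_identity_corner:
  fixes a b c gNN :: "'a :: field"
  assumes "a = b + c" and "a \<noteq> 0"
  shows "(-1 / a) * ((a + a * gNN) * (-1 / a)) = (1 + gNN) / (c + b)"
  using assms by (simp add: divide_simps add.commute) (simp add: algebra_simps)

text \<open>
  One entry of the induction step: combining the entries of the middle matrix S with the
  entries u = (beta_p - beta_N) / (beta_p + conj beta_N), w = -1 / (beta_p + conj beta_N)
  of the arrow matrix P^(-1) gives the Cauchy entry.
\<close>
lemma middle_matrix_congruence_entry:
  fixes \<beta> :: "nat \<Rightarrow> complex" and g :: "nat \<Rightarrow> nat \<Rightarrow> complex"
  assumes a: "a = \<beta> N + cnj (\<beta> N)"
    and fresh: "\<beta> N \<notin> \<beta> ` {..<N}"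
    and pos: "\<And>p. p \<le> N \<Longrightarrow> Re (\<beta> p) > 0"
    and i: "i \<le> N" and j: "j \<le> N"
  defines "X \<equiv> arrow_mat N (\<lambda>p. - a / (\<beta> N - \<beta> p)) (\<lambda>p. if p < N then a / (\<beta> N - \<beta> p) else - a)"
  defines "S \<equiv> four_block_mat (cauchy_mat N \<beta> g) (0\<^sub>m N 1) (0\<^sub>m 1 N) (mat 1 1 (\<lambda>_. a))
             + (1 / a) \<cdot>\<^sub>m (mat_adjoint X * mat (Suc N) (Suc N) (\<lambda>(p, q). g p q) * X)"
  shows "((cnj (\<beta> i) - cnj (\<beta> N)) / (cnj (\<beta> i) + \<beta> N))
           * (S $$ (i, j) * ((\<beta> j - \<beta> N) / (\<beta> j + cnj (\<beta> N))) + S $$ (i, N) * (-1 / (\<beta> j + cnj (\<beta> N))))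
         + (-1 / (cnj (\<beta> i) + \<beta> N))
           * (S $$ (N, j) * ((\<beta> j - \<beta> N) / (\<beta> j + cnj (\<beta> N))) + S $$ (N, N) * (-1 / (\<beta> j + cnj (\<beta> N))))
       = (1 + g i j) / (cnj (\<beta> i) + \<beta> j)"
proof -
  have denom_nz: "cnj (\<beta> p) + \<beta> q \<noteq> 0" if "p \<le> N" "q \<le> N" for p q
    using cnj_add_nonzero pos that by blast
  have denom_nz': "\<beta> p + cnj (\<beta> N) \<noteq> 0" if "p \<le> N" for p
    using denom_nz[OF order.refl that] by (simp add: add.commute)
  have a_nz: "a \<noteq> 0" using denom_nz' a by auto
  have a_comm: "cnj (\<beta> N) + \<beta> N = a" unfolding a by (simp add: add.commute)
  have diff_nz: "\<beta> N - \<beta> p \<noteq> 0" and cnj_diff_nz: "cnj (\<beta> N) - cnj (\<beta> p) \<noteq> 0" if "p < N" for p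
    using fresh that by auto
  note entries = middle_matrix_entries[where \<beta> = \<beta> and N = N and g = g, OF a a_nz fresh]
  have S_corner: "S $$ (N, N) = a + a * g N N"
    unfolding S_def X_def by (rule entries(1))
  have S_last_col: "S $$ (p, N) = a * (g p N - g N N) / (cnj (\<beta> N) - cnj (\<beta> p))" if "p < N" for p
    unfolding S_def X_def by (rule entries(2)[OF that])
  have S_last_row: "S $$ (N, q) = a * (g N q - g N N) / (\<beta> N - \<beta> q)" if "q < N" for q
    unfolding S_def X_def by (rule entries(3)[OF that])
  have S_interior: "S $$ (p, q) = (1 + g p q) / (cnj (\<beta> p) + \<beta> q)
      + a * (g p q - g p N - g N q + g N N) / ((cnj (\<beta> N) - cnj (\<beta> p)) * (\<beta> N - \<beta> q))"
    if "p < N" "q < N" for p q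
    unfolding S_def X_def by (rule entries(4)[OF that])
  consider "i < N" "j < N" | "i < N" "j = N" | "i = N" "j < N" | "i = N" "j = N"
    using i j by linarith
  then show ?thesis
  proof cases
    case 1
    show ?thesis unfolding S_corner S_last_col[OF 1(1)] S_last_row[OF 1(2)] S_interior[OF 1]
      by (rule congruence_identity_interior) (use denom_nz denom_nz' diff_nz cnj_diff_nz 1 i j a in auto)
  next
    case 2
    show ?thesis unfolding 2(2) S_corner S_last_col[OF 2(1)] a[symmetric]
      using congruence_identity_last_col[OF _ a_nz cnj_diff_nz[OF 2(1)], of "\<beta> N" "g i N" "g N N"]
        denom_nz[OF i order.refl]
      by (simp add: add.commute)
  next
    case 3
    show ?thesis unfolding 3(1) S_corner S_last_row[OF 3(2)] a_comm
      using congruence_identity_last_row[OF denom_nz'[OF j] a_nz diff_nz[OF 3(2)], of "g N j" "g N N"]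
      by simp
  next
    case 4
    show ?thesis unfolding 4 S_corner a_comm a[symmetric]
      using congruence_identity_corner[OF a a_nz, of "g N N"] a_comm by simp
  qed
qed

lemma cauchy_mat_congruence_step:
  fixes \<beta> :: "nat \<Rightarrow> complex" and g :: "nat \<Rightarrow> nat \<Rightarrow> complex"
  assumes a: "a = \<beta> N + cnj (\<beta> N)"
    and fresh: "\<beta> N \<notin> \<beta> ` {..<N}"
    and pos: "\<And>p. p \<le> N \<Longrightarrow> Re (\<beta> p) > 0"
  defines "P \<equiv> arrow_mat N (\<lambda>p. (\<beta> p - \<beta> N) / (\<beta> p + cnj (\<beta> N))) (\<lambda>p. -1 / (\<beta> p + cnj (\<beta> N)))"
  defines "X \<equiv> arrow_mat N (\<lambda>p. - a / (\<beta> N - \<beta> p)) (\<lambda>p. if p < N then a / (\<beta> N - \<beta> p) else - a)"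
  shows "mat_adjoint P * (four_block_mat (cauchy_mat N \<beta> g) (0\<^sub>m N 1) (0\<^sub>m 1 N) (mat 1 1 (\<lambda>_. a))
           + (1 / a) \<cdot>\<^sub>m (mat_adjoint X * mat (Suc N) (Suc N) (\<lambda>(p, q). g p q) * X)) * P
         = cauchy_mat (Suc N) \<beta> g"
    (is "mat_adjoint P * ?S * P = _")
proof (rule eq_matI)
  have S_carrier: "?S \<in> carrier_mat (Suc N) (Suc N)" unfolding X_def by auto
  fix i j assume "i < dim_row (cauchy_mat (Suc N) \<beta> g)" "j < dim_col (cauchy_mat (Suc N) \<beta> g)"
  hence i: "i \<le> N" and j: "j \<le> N" by auto
  have "(mat_adjoint P * ?S * P) $$ (i, j) =
      ((cnj (\<beta> i) - cnj (\<beta> N)) / (cnj (\<beta> i) + \<beta> N))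
        * (?S $$ (i, j) * ((\<beta> j - \<beta> N) / (\<beta> j + cnj (\<beta> N))) + ?S $$ (i, N) * (-1 / (\<beta> j + cnj (\<beta> N))))
    + (-1 / (cnj (\<beta> i) + \<beta> N))
        * (?S $$ (N, j) * ((\<beta> j - \<beta> N) / (\<beta> j + cnj (\<beta> N))) + ?S $$ (N, N) * (-1 / (\<beta> j + cnj (\<beta> N))))"
    unfolding P_def arrow_mat_congruence_index[OF S_carrier i j] by simp
  also have "\<dots> = (1 + g i j) / (cnj (\<beta> i) + \<beta> j)"
    unfolding X_def by (rule middle_matrix_congruence_entry[OF a fresh pos i j])
  finally show "(mat_adjoint P * ?S * P) $$ (i, j) = cauchy_mat (Suc N) \<beta> g $$ (i, j)"
    using i j by simp
qed (auto simp: P_def)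

section \<open>T_k is the Cauchy-like matrix\<close>

lemma Tmat_recursion_arrow:
  assumes F: "F \<in> carrier_mat n n" and N: "N \<ge> 1"
    and a_nz: "re_a \<alpha> (Suc N) \<noteq> 0" and fresh: "\<alpha> (Suc N) \<notin> \<alpha> ` {1..N}"
  defines "a \<equiv> 2 * re_a \<alpha> (Suc N)"
  defines "X \<equiv> arrow_mat N (\<lambda>p. - a / (\<alpha> (Suc N) - \<alpha> (Suc p)))
                          (\<lambda>p. if p < N then a / (\<alpha> (Suc N) - \<alpha> (Suc p)) else - a)"
  shows "Tmat n A C F \<alpha> (Suc N) = mat_adjoint (Pinv \<alpha> (Suc N))
      * (four_block_mat (Tmat n A C F \<alpha> N) (0\<^sub>m N 1) (0\<^sub>m 1 N) (mat 1 1 (\<lambda>_. a))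
         + (1 / a) \<cdot>\<^sub>m (mat_adjoint X * mat (Suc N) (Suc N) (\<lambda>(p, q). gram_entry n A C F \<alpha> p q) * X))
      * Pinv \<alpha> (Suc N)"
proof -
  obtain m where m: "N = Suc m" using N by (cases N) auto
  define V where "V = Vmat n A C \<alpha> (Suc N)"
  have X_carrier: "X \<in> carrier_mat (Suc N) (Suc N)" unfolding X_def by simp
  have V_carrier: "V \<in> carrier_mat n (Suc N)" unfolding V_def by simp
  have Q_inv: "minv (Qmat \<alpha> (Suc N)) = X"
    unfolding X_def a_def by (rule Qmat_inverse[OF a_nz fresh])
  have "mat_adjoint X * mat_adjoint V * F = mat_adjoint X * (mat_adjoint V * F)"
    by (rule assoc_mult_mat[of _ "Suc N" "Suc N" _ n _ n]) (use X_carrier V_carrier F in auto)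
  then have "mat_adjoint X * mat_adjoint V * F * V = mat_adjoint X * (mat_adjoint V * F) * V"
    by simp
  also have "\<dots> = mat_adjoint X * (mat_adjoint V * F * V)"
    by (rule assoc_mult_mat[of _ "Suc N" "Suc N" _ n _ "Suc N"]) (use X_carrier V_carrier F in auto)
  finally have gram: "mat_adjoint X * mat_adjoint V * F * V * X
      = mat_adjoint X * mat (Suc N) (Suc N) (\<lambda>(p, q). gram_entry n A C F \<alpha> p q) * X"
    unfolding V_def Vmat_gram[OF F] by simp
  show ?thesis
    unfolding gram[symmetric] unfolding Q_inv[symmetric] V_def a_def m
    by (simp only: Tmat.simps Let_def diff_Suc_1)
qed

lemma Tmat_eq_cauchy_mat:
  assumes F: "F \<in> carrier_mat n n"
    and dist: "inj_on \<alpha> {1..}"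
    and pos: "\<And>j. j \<ge> 1 \<Longrightarrow> Re (\<alpha> j) > 0"
  shows "Tmat n A C F \<alpha> (Suc m) = cauchy_mat (Suc m) (\<lambda>i. \<alpha> (Suc i)) (gram_entry n A C F \<alpha>)"
proof (induction m)
  case 0
  show ?case
    using Vmat_gram[OF F, of A C \<alpha> 1] double_re_a[of \<alpha> 1]
    by (intro eq_matI) (auto simp: cauchy_mat_def add.commute)
next
  case (Suc m)
  define N where "N = Suc m"
  have IH: "Tmat n A C F \<alpha> N = cauchy_mat N (\<lambda>i. \<alpha> (Suc i)) (gram_entry n A C F \<alpha>)"
    unfolding N_def by (rule Suc.IH)
  have N1: "N \<ge> 1" unfolding N_def by simp
  have fresh: "\<alpha> (Suc N) \<notin> \<alpha> ` {1..N}"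
  proof
    assume "\<alpha> (Suc N) \<in> \<alpha> ` {1..N}"
    then obtain j where "j \<in> {1..N}" "\<alpha> (Suc N) = \<alpha> j" by auto
    then show False using inj_onD[OF dist, of "Suc N" j] by auto
  qed
  have a_nz: "re_a \<alpha> (Suc N) \<noteq> 0"
    using pos[of "Suc N"] unfolding re_a_def by auto
  have "Tmat n A C F \<alpha> (Suc N) = cauchy_mat (Suc N) (\<lambda>i. \<alpha> (Suc i)) (gram_entry n A C F \<alpha>)"
    unfolding Tmat_recursion_arrow[OF F N1 a_nz fresh] IH Pinv_arrow
  proof (rule cauchy_mat_congruence_step[where \<beta> = "\<lambda>i. \<alpha> (Suc i)"])
    show "2 * re_a \<alpha> (Suc N) = \<alpha> (Suc N) + cnj (\<alpha> (Suc N))" by (rule double_re_a)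
    show "\<alpha> (Suc N) \<notin> (\<lambda>i. \<alpha> (Suc i)) ` {..<N}"
      using fresh by (auto simp: image_iff)
    show "Re (\<alpha> (Suc p)) > 0" if "p \<le> N" for p using pos by simp
  qed
  then show ?case unfolding N_def .
qed

theorem proposition6p1:
  fixes n :: nat and A C F :: "complex mat" and \<alpha> :: "nat \<Rightarrow> complex"
  assumes A: "A \<in> carrier_mat n n"
    and C: "C \<in> carrier_mat 1 n"
    and F: "F \<in> carrier_mat n n"
    and herm: "mat_adjoint F = F"
    and dist: "inj_on \<alpha> {1..}"
    and pos: "\<And>j. j \<ge> 1 \<Longrightarrow> Re (\<alpha> j) > 0"
    and nonsing: "\<And>j. j \<ge> 1 \<Longrightarrow> invertible_mat (- mat_adjoint A + \<alpha> j \<cdot>\<^sub>m 1\<^sub>m n)"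
    and k: "k \<ge> 1"
  shows "mat_adjoint (Lam \<alpha> k) * Tmat n A C F \<alpha> k + Tmat n A C F \<alpha> k * Lam \<alpha> k
           - mat_adjoint (Vmat n A C \<alpha> k) * F * Vmat n A C \<alpha> k
           - ones k * mat_adjoint (ones k) = 0\<^sub>m k k
       \<and> (\<forall>i j. 1 \<le> i \<and> i \<le> k \<and> 1 \<le> j \<and> j \<le> k \<longrightarrow>
            Tmat n A C F \<alpha> k $$ (i - 1, j - 1) =
              (1 + (mat_adjoint (Vmat n A C \<alpha> k) * F * Vmat n A C \<alpha> k) $$ (i - 1, j - 1))
              / (cnj (\<alpha> i) + \<alpha> j))
       \<and> (k \<ge> 2 \<longrightarrow>
            mat (k - 1) (k - 1) (\<lambda>(i, j). Tmat n A C F \<alpha> k $$ (i, j)) = Tmat n A C F \<alpha> (k - 1))"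
proof -
  define \<beta> where "\<beta> = (\<lambda>i. \<alpha> (Suc i))"
  define g where "g = gram_entry n A C F \<alpha>"
  have T: "Tmat n A C F \<alpha> l = cauchy_mat l \<beta> g" if "l \<ge> 1" for l
    using Tmat_eq_cauchy_mat[OF F dist pos, where m = "l - 1" and A = A and C = C] that
    unfolding \<beta>_def g_def by simp
  have G: "mat_adjoint (Vmat n A C \<alpha> k) * F * Vmat n A C \<alpha> k = mat k k (\<lambda>(i, j). g i j)"
    unfolding g_def by (rule Vmat_gram[OF F])
  have Lam: "Lam \<alpha> k = mat_diag k \<beta>"
    unfolding Lam_def \<beta>_def by simp
  have nz: "cnj (\<beta> i) + \<beta> j \<noteq> 0" for i j
    unfolding \<beta>_def by (rule cnj_add_nonzero) (simp_all add: pos)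
  have lyapunov: "mat_adjoint (Lam \<alpha> k) * Tmat n A C F \<alpha> k + Tmat n A C F \<alpha> k * Lam \<alpha> k
           - mat_adjoint (Vmat n A C \<alpha> k) * F * Vmat n A C \<alpha> k - ones k * mat_adjoint (ones k) = 0\<^sub>m k k"
    unfolding T[OF k] G Lam by (rule cauchy_mat_lyapunov[OF nz])
  have entries: "Tmat n A C F \<alpha> k $$ (i - 1, j - 1) =
      (1 + (mat_adjoint (Vmat n A C \<alpha> k) * F * Vmat n A C \<alpha> k) $$ (i - 1, j - 1)) / (cnj (\<alpha> i) + \<alpha> j)"
    if "1 \<le> i" "i \<le> k" "1 \<le> j" "j \<le> k" for i j
  proof -
    have "Suc (i - 1) = i" "Suc (j - 1) = j" using that by auto
    then show ?thesis using that unfolding T[OF k] G \<beta>_def by simp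
  qed
  have leading: "mat (k - 1) (k - 1) (\<lambda>(i, j). Tmat n A C F \<alpha> k $$ (i, j)) = Tmat n A C F \<alpha> (k - 1)"
    if "k \<ge> 2"
  proof -
    have "Tmat n A C F \<alpha> (k - 1) = cauchy_mat (k - 1) \<beta> g" using that by (intro T) simp
    then show ?thesis unfolding T[OF k] using cauchy_mat_leading[of "k - 1" k \<beta> g] by simp
  qed
  show ?thesis using lyapunov entries leading by blast
qed

end
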